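(* Let $j,k$ be two settings. For each $i\in\{j,k\}$ suppose $Y^i = \theta^i D^i + f^i(X^i,A^i) + \varepsilon^i$ with $E[\varepsilon^i\mid D^i,X^i,A^i]=0$ (with $D^i$ a real-valued treatment, $X^i$ observed and $A^i$ unobserved covariates), let $\theta^i_s$ denote the short-regression parameter omitting $A^i$, and let $B^i = \theta^i_s - \theta^i$ be the omitted variable bias. Assume $B^i \in [\nu^i_l,\nu^i_u]$ for known constants $\nu^i_l\le\nu^i_u$, $i\in\{j,k\}$, and assume $B^j = \rho^{jk} B^k$ for some $\rho^{jk} \in [\rho^{jk}_l, \rho^{jk}_u]$ with known constants $0<\rho^{jk}_l\le 1$ and $\rho^{jk}_u \ge 1$. Let \[ \mathbb{C}^{jk} = \{(\rho^{jk}_l-1)\nu^k_l,\ (\rho^{jk}_u-1)\nu^k_l,\ (\rho^{jk}_l-1)\nu^k_u,\ (\rho^{jk}_u-1)\nu^k_u\}, \] $c^{jk}_l = \min \mathbb{C}^{jk}$, $c^{jk}_u = \max\mathbb{C}^{jk}$, and $\mathcal{I}^i = [\theta^i_s - \nu^i_u, \theta^i_s - \nu^i_l]$. Then the true pair $(\theta^j,\theta^k)$ belongs to \[ \mathcal{J}^{jk} = \{(\theta^j,\theta^k) : \theta^j\in\mathcal{I}^j,\ \theta^k\in\mathcal{I}^k,\ \theta^j-\theta^k \in \mathcal{I}^{jk}_D\}, \] where $\mathcal{I}^{jk}_D = [(\theta^j_s-\theta^k_s) - c^{jk}_u,\ (\theta^j_s-\theta^k_s) - c^{jk}_l]$.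
   Context: For a setting $i$, the long parameter is $\theta^i = E[Y^i\alpha^i]$ with $\alpha^i = (D^i - E[D^i\mid X^i,A^i])/E[(D^i - E[D^i\mid X^i,A^i])^2]$, and the short parameter is $\theta^i_s = E[Y^i\alpha^i_s]$ with $\alpha^i_s = (D^i - E[D^i\mid X^i])/E[(D^i - E[D^i\mid X^i])^2]$. The omitted variable bias is $B^i = \theta^i_s - \theta^i$. *)

theory Defs
  imports "HOL-Probability.Probability"
begin

definition gen_sigma :: "'a measure \<Rightarrow> ('a \<Rightarrow> 'b) \<Rightarrow> 'b measure \<Rightarrow> 'a measure" where
  "gen_sigma M Z N = vimage_algebra (space M) Z N"

definition long_alpha :: "'a measure \<Rightarrow> 'x measure \<Rightarrow> 'u measure \<Rightarrow>
    ('a \<Rightarrow> real) \<Rightarrow> ('a \<Rightarrow> 'x) \<Rightarrow> ('a \<Rightarrow> 'u) \<Rightarrow> 'a \<Rightarrow> real" where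
  "long_alpha M MX MA D X A =
     (let R = (\<lambda>\<omega>. D \<omega> - real_cond_exp M (gen_sigma M (\<lambda>\<omega>. (X \<omega>, A \<omega>)) (MX \<Otimes>\<^sub>M MA)) D \<omega>)
      in (\<lambda>\<omega>. R \<omega> / (\<integral>\<omega>'. (R \<omega>')\<^sup>2 \<partial>M)))"

definition short_alpha :: "'a measure \<Rightarrow> 'x measure \<Rightarrow>
    ('a \<Rightarrow> real) \<Rightarrow> ('a \<Rightarrow> 'x) \<Rightarrow> 'a \<Rightarrow> real" where
  "short_alpha M MX D X =
     (let R = (\<lambda>\<omega>. D \<omega> - real_cond_exp M (gen_sigma M X MX) D \<omega>)
      in (\<lambda>\<omega>. R \<omega> / (\<integral>\<omega>'. (R \<omega>')\<^sup>2 \<partial>M)))"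

definition long_param :: "'a measure \<Rightarrow> 'x measure \<Rightarrow> 'u measure \<Rightarrow>
    ('a \<Rightarrow> real) \<Rightarrow> ('a \<Rightarrow> real) \<Rightarrow> ('a \<Rightarrow> 'x) \<Rightarrow> ('a \<Rightarrow> 'u) \<Rightarrow> real" where
  "long_param M MX MA Y D X A = (\<integral>\<omega>. Y \<omega> * long_alpha M MX MA D X A \<omega> \<partial>M)"

definition short_param :: "'a measure \<Rightarrow> 'x measure \<Rightarrow>
    ('a \<Rightarrow> real) \<Rightarrow> ('a \<Rightarrow> real) \<Rightarrow> ('a \<Rightarrow> 'x) \<Rightarrow> real" where
  "short_param M MX Y D X = (\<integral>\<omega>. Y \<omega> * short_alpha M MX D X \<omega> \<partial>M)"

definition ov_bias :: "'a measure \<Rightarrow> 'x measure \<Rightarrow> 'u measure \<Rightarrow>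
    ('a \<Rightarrow> real) \<Rightarrow> ('a \<Rightarrow> real) \<Rightarrow> ('a \<Rightarrow> 'x) \<Rightarrow> ('a \<Rightarrow> 'u) \<Rightarrow> real" where
  "ov_bias M MX MA Y D X A = short_param M MX Y D X - long_param M MX MA Y D X A"

definition plm_model :: "'a measure \<Rightarrow> 'x measure \<Rightarrow> 'u measure \<Rightarrow>
    ('a \<Rightarrow> real) \<Rightarrow> ('a \<Rightarrow> real) \<Rightarrow> ('a \<Rightarrow> 'x) \<Rightarrow> ('a \<Rightarrow> 'u) \<Rightarrow>
    ('x \<times> 'u \<Rightarrow> real) \<Rightarrow> ('a \<Rightarrow> real) \<Rightarrow> bool" where
  "plm_model M MX MA Y D X A f eps \<longleftrightarrow>
     prob_space M \<and>
     D \<in> borel_measurable M \<and> X \<in> M \<rightarrow>\<^sub>M MX \<and> A \<in> M \<rightarrow>\<^sub>M MA \<and>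
     f \<in> borel_measurable (MX \<Otimes>\<^sub>M MA) \<and>
     integrable M eps \<and>
     (\<forall>\<omega>\<in>space M. Y \<omega> = long_param M MX MA Y D X A * D \<omega> + f (X \<omega>, A \<omega>) + eps \<omega>) \<and>
     (AE \<omega> in M. real_cond_exp M
        (gen_sigma M (\<lambda>\<omega>. (D \<omega>, X \<omega>, A \<omega>)) (borel \<Otimes>\<^sub>M MX \<Otimes>\<^sub>M MA)) eps \<omega> = 0)"

definition Cset :: "real \<Rightarrow> real \<Rightarrow> real \<Rightarrow> real \<Rightarrow> real set" where
  "Cset rl ru nl nu = {(rl - 1) * nl, (ru - 1) * nl, (rl - 1) * nu, (ru - 1) * nu}"

definition c_low :: "real \<Rightarrow> real \<Rightarrow> real \<Rightarrow> real \<Rightarrow> real" where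
  "c_low rl ru nl nu = Min (Cset rl ru nl nu)"

definition c_up :: "real \<Rightarrow> real \<Rightarrow> real \<Rightarrow> real \<Rightarrow> real" where
  "c_up rl ru nl nu = Max (Cset rl ru nl nu)"

definition I_int :: "real \<Rightarrow> real \<Rightarrow> real \<Rightarrow> real set" where
  "I_int ts nl nu = {ts - nu .. ts - nl}"

definition ID_int :: "real \<Rightarrow> real \<Rightarrow> real \<Rightarrow> real \<Rightarrow> real \<Rightarrow> real \<Rightarrow> real set" where
  "ID_int tsj tsk rl ru nkl nku =
     {(tsj - tsk) - c_up rl ru nkl nku .. (tsj - tsk) - c_low rl ru nkl nku}"

definition J_set :: "real \<Rightarrow> real \<Rightarrow> real \<Rightarrow> real \<Rightarrow> real \<Rightarrow> real \<Rightarrow>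
    real \<Rightarrow> real \<Rightarrow> (real \<times> real) set" where
  "J_set tsj tsk njl nju nkl nku rl ru =
     {(tj, tk). tj \<in> I_int tsj njl nju \<and> tk \<in> I_int tsk nkl nku \<and>
                tj - tk \<in> ID_int tsj tsk rl ru nkl nku}"

end

theory Submission
  imports Defs
begin

lemma mult_right_between:
  fixes a x c b :: "'a :: linordered_idom"
  assumes "a \<le> x" "x \<le> c"
  shows "min (a * b) (c * b) \<le> x * b \<and> x * b \<le> max (a * b) (c * b)"
proof (cases "0 \<le> b")
  case True
  then have "a * b \<le> x * b" "x * b \<le> c * b"
    using assms by (auto intro: mult_right_mono)
  then show ?thesis by linarith
next
  case False
  then have "c * b \<le> x * b" "x * b \<le> a * b"
    using assms by (auto intro: mult_right_mono_neg)
  then show ?thesis by linarith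
qed

lemma mult_between_corners:
  fixes a b c d x y :: "'a :: linordered_idom"
  assumes "a \<le> x" "x \<le> b" "c \<le> y" "y \<le> d"
  shows "Min {a * c, b * c, a * d, b * d} \<le> x * y \<and> x * y \<le> Max {a * c, b * c, a * d, b * d}"
proof -
  have x_side: "min (a * y) (b * y) \<le> x * y \<and> x * y \<le> max (a * y) (b * y)"
    using mult_right_between assms(1,2) .
  have "min (c * a) (d * a) \<le> y * a \<and> y * a \<le> max (c * a) (d * a)"
       "min (c * b) (d * b) \<le> y * b \<and> y * b \<le> max (c * b) (d * b)"
    using mult_right_between assms(3,4) by blast+
  then have y_side: "min (a * c) (a * d) \<le> a * y \<and> a * y \<le> max (a * c) (a * d)"
       "min (b * c) (b * d) \<le> b * y \<and> b * y \<le> max (b * c) (b * d)"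
    by (simp_all add: mult.commute)
  show ?thesis
    using x_side y_side by (auto simp: min_def max_def split: if_splits)
qed

lemma mult_between_c_low_c_up:
  assumes "rl \<le> rho" "rho \<le> ru" "nl \<le> b" "b \<le> nu"
  shows "(rho - 1) * b \<in> {c_low rl ru nl nu .. c_up rl ru nl nu}"
  using mult_between_corners[of "rl - 1" "rho - 1" "ru - 1" nl b nu] assms
  by (simp add: c_low_def c_up_def Cset_def)

lemma long_param_eq_short_param_minus_ov_bias:
  "long_param M MX MA Y D X A = short_param M MX Y D X - ov_bias M MX MA Y D X A"
  by (simp add: ov_bias_def)

theorem proposition2:
  fixes Mj :: "'a measure" and MXj :: "'x measure" and MAj :: "'u measure"
    and Yj Dj epsj :: "'a \<Rightarrow> real" and Xj :: "'a \<Rightarrow> 'x" and Aj :: "'a \<Rightarrow> 'u"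
    and fj :: "'x \<times> 'u \<Rightarrow> real"
    and Mk :: "'b measure" and MXk :: "'y measure" and MAk :: "'v measure"
    and Yk Dk epsk :: "'b \<Rightarrow> real" and Xk :: "'b \<Rightarrow> 'y" and Ak :: "'b \<Rightarrow> 'v"
    and fk :: "'y \<times> 'v \<Rightarrow> real"
    and njl nju nkl nku rho rl ru :: real
  assumes model_j: "plm_model Mj MXj MAj Yj Dj Xj Aj fj epsj"
    and model_k: "plm_model Mk MXk MAk Yk Dk Xk Ak fk epsk"
    and nj: "njl \<le> nju" and nk: "nkl \<le> nku"
    and Bj: "ov_bias Mj MXj MAj Yj Dj Xj Aj \<in> {njl..nju}"
    and Bk: "ov_bias Mk MXk MAk Yk Dk Xk Ak \<in> {nkl..nku}"
    and rl: "0 < rl" "rl \<le> 1" and ru: "ru \<ge> 1"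
    and rho: "rho \<in> {rl..ru}"
    and Bjk: "ov_bias Mj MXj MAj Yj Dj Xj Aj = rho * ov_bias Mk MXk MAk Yk Dk Xk Ak"
  shows "(long_param Mj MXj MAj Yj Dj Xj Aj, long_param Mk MXk MAk Yk Dk Xk Ak)
           \<in> J_set (short_param Mj MXj Yj Dj Xj) (short_param Mk MXk Yk Dk Xk)
                   njl nju nkl nku rl ru"
proof -
  define bj where "bj = ov_bias Mj MXj MAj Yj Dj Xj Aj"
  define bk where "bk = ov_bias Mk MXk MAk Yk Dk Xk Ak"
  have bias_difference: "bj - bk = (rho - 1) * bk"
    using Bjk by (simp add: bj_def bk_def algebra_simps)
  have "(rho - 1) * bk \<in> {c_low rl ru nkl nku .. c_up rl ru nkl nku}"
    using mult_between_c_low_c_up rho Bk by (simp add: bk_def)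
  then show ?thesis
    using Bj Bk bias_difference
    unfolding J_set_def I_int_def ID_int_def long_param_eq_short_param_minus_ov_bias
      bj_def [symmetric] bk_def [symmetric]
    by auto
qed

end
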